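(* Let $s\in\{0,\tfrac12\}$, $\lambda\in\mathbb{C}$ and $\sigma\in\mathrm{Aut}(\mathfrak{L}^s_\lambda)$. Then there exist $\tau\in\mathfrak{I}$, $\epsilon\in\{1,-1\}$, $\alpha,\mu\in\mathbb{C}\setminus\{0\}$ and $\beta\in\mathbb{C}$ such that for all $m\in\mathbb{Z}$, $$(\sigma\tau)(L_m)=\epsilon\alpha^mL_{\epsilon m}+m\alpha^m\beta\, I_{\epsilon m},\qquad (\sigma\tau)(I_m)=\alpha^m\mu\, I_{\epsilon m}.$$
   Context: For $s\in\{0,\tfrac12\}$ and $\lambda\in\mathbb{C}$, $\mathfrak{L}^s_\lambda$ is the complex Lie superalgebra with basis $\{L_m,I_m,G_p,H_p : m\in\mathbb{Z},\ p\in s+\mathbb{Z}\}$, even part spanned by the $L_m,I_m$, odd part spanned by the $G_p,H_p$, with brackets $[L_m,L_n]=(m-n)L_{m+n}$, $[L_m,I_n]=(m-n)I_{m+n}$, $[L_m,H_p]=(\tfrac m2-p)H_{m+p}$, $[L_m,G_p]=(\tfrac m2-p)G_{m+p}+\lambda(m+1)H_{m+p}$, $[I_m,G_p]=(m-2p)H_{m+p}$, $[G_p,G_q]=I_{p+q}$, plus super-antisymmetry; all other brackets of basis elements are zero. $\mathrm{Aut}(\mathfrak{L})$ is the group of bijective parity-preserving linear maps $\sigma$ with $\sigma([x,y])=[\sigma(x),\sigma(y)]$. $\mathfrak{I}$ is the subgroup of $\mathrm{Aut}(\mathfrak{L})$ generated by the maps $\exp(\alpha\,\mathrm{ad}\,I_k)=\mathrm{id}+\alpha\,\mathrm{ad}\,I_k$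 ($\alpha\in\mathbb{C}$, $k\in\mathbb{Z}$), where $\mathrm{ad}\,x(y)=[x,y]$. *)

theory Defs
  imports Complex_Main
begin

text \<open>Basis of the Lie superalgebra L^s_lambda.  Lb m = L_m, Ib m = I_m,
  Gb k = G_(k+s), Hb k = H_(k+s)  (k integer, so p = k + s ranges over s + Z).\<close>

datatype sbasis = Lb int | Ib int | Gb int | Hb int

type_synonym svec = "sbasis \<Rightarrow> complex"

definition bvec :: "sbasis \<Rightarrow> svec" where
  "bvec b = (\<lambda>c. if c = b then 1 else 0)"

definition smul :: "complex \<Rightarrow> svec \<Rightarrow> svec" where
  "smul a x = (\<lambda>b. a * x b)"

definition supp :: "svec \<Rightarrow> sbasis set" where
  "supp x = {b. x b \<noteq> 0}"

definition Vsp :: "svec set" where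
  "Vsp = {x. finite (supp x)}"

definition is_even_b :: "sbasis \<Rightarrow> bool" where
  "is_even_b b = (case b of Lb _ \<Rightarrow> True | Ib _ \<Rightarrow> True | _ \<Rightarrow> False)"

definition Veven :: "svec set" where
  "Veven = {x \<in> Vsp. \<forall>b\<in>supp x. is_even_b b}"

definition Vodd :: "svec set" where
  "Vodd = {x \<in> Vsp. \<forall>b\<in>supp x. \<not> is_even_b b}"

text \<open>2s as an integer (s = 0 or s = 1/2).\<close>
definition twos :: "complex \<Rightarrow> int" where
  "twos s = (if s = 0 then 0 else 1)"

fun br :: "complex \<Rightarrow> complex \<Rightarrow> sbasis \<Rightarrow> sbasis \<Rightarrow> svec" where
  "br s lam (Lb m) (Lb n) = smul (of_int (m - n)) (bvec (Lb (m + n)))"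
| "br s lam (Lb m) (Ib n) = smul (of_int (m - n)) (bvec (Ib (m + n)))"
| "br s lam (Ib n) (Lb m) = smul (- of_int (m - n)) (bvec (Ib (m + n)))"
| "br s lam (Lb m) (Hb k) = smul (of_int m / 2 - (of_int k + s)) (bvec (Hb (m + k)))"
| "br s lam (Hb k) (Lb m) = smul (- (of_int m / 2 - (of_int k + s))) (bvec (Hb (m + k)))"
| "br s lam (Lb m) (Gb k) =
     (\<lambda>c. smul (of_int m / 2 - (of_int k + s)) (bvec (Gb (m + k))) c
         + smul (lam * of_int (m + 1)) (bvec (Hb (m + k))) c)"
| "br s lam (Gb k) (Lb m) =
     (\<lambda>c. - (smul (of_int m / 2 - (of_int k + s)) (bvec (Gb (m + k))) c
         + smul (lam * of_int (m + 1)) (bvec (Hb (m + k))) c))"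
| "br s lam (Ib m) (Gb k) = smul (of_int m - 2 * (of_int k + s)) (bvec (Hb (m + k)))"
| "br s lam (Gb k) (Ib m) = smul (- (of_int m - 2 * (of_int k + s))) (bvec (Hb (m + k)))"
| "br s lam (Gb k) (Gb l) = bvec (Ib (k + l + twos s))"
| "br s lam _ _ = (\<lambda>c. 0)"

definition bracket :: "complex \<Rightarrow> complex \<Rightarrow> svec \<Rightarrow> svec \<Rightarrow> svec" where
  "bracket s lam x y =
     (\<lambda>d. \<Sum>b\<in>supp x. \<Sum>c\<in>supp y. x b * y c * br s lam b c d)"

definition is_aut :: "complex \<Rightarrow> complex \<Rightarrow> (svec \<Rightarrow> svec) \<Rightarrow> bool" where
  "is_aut s lam \<sigma> \<longleftrightarrow>
     bij_betw \<sigma> Vsp Vsp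
   \<and> (\<forall>x\<in>Vsp. \<forall>y\<in>Vsp. \<forall>a b. \<sigma> (\<lambda>d. a * x d + b * y d) = (\<lambda>d. a * \<sigma> x d + b * \<sigma> y d))
   \<and> \<sigma> ` Veven \<subseteq> Veven \<and> \<sigma> ` Vodd \<subseteq> Vodd
   \<and> (\<forall>x\<in>Vsp. \<forall>y\<in>Vsp. \<sigma> (bracket s lam x y) = bracket s lam (\<sigma> x) (\<sigma> y))"

definition expI :: "complex \<Rightarrow> complex \<Rightarrow> complex \<Rightarrow> int \<Rightarrow> svec \<Rightarrow> svec" where
  "expI s lam \<alpha> k x = (\<lambda>d. x d + \<alpha> * bracket s lam (bvec (Ib k)) x d)"

text \<open>The group generated by the exp(alpha ad I_k) (inverses taken on the algebra).\<close>
inductive_set Igrp :: "complex \<Rightarrow> complex \<Rightarrow> (svec \<Rightarrow> svec) set" for s lam where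
  gen: "expI s lam \<alpha> k \<in> Igrp s lam"
| ident: "id \<in> Igrp s lam"
| comp: "\<tau>1 \<in> Igrp s lam \<Longrightarrow> \<tau>2 \<in> Igrp s lam \<Longrightarrow> \<tau>1 \<circ> \<tau>2 \<in> Igrp s lam"
| inv: "\<tau> \<in> Igrp s lam \<Longrightarrow> inv_into Vsp \<tau> \<in> Igrp s lam"

end

theory Submission
  imports Defs
begin

text \<open>Since \<open>I\<^sub>k\<close> is a bracket of two \<open>G\<close>'s, \<open>\<sigma>\<close> maps the \<open>I\<close>'s into their span. Comparing extreme
  \<open>L\<close>-degrees in \<open>[\<sigma> L\<^sub>0, \<sigma> L\<^sub>k] = -k \<sigma> L\<^sub>k\<close> shows that \<open>\<sigma> L\<^sub>0\<close> has \<open>L\<close>-part \<open>\<epsilon> L\<^sub>0\<close>, so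
  \<open>ad \<sigma> L\<^sub>0\<close> acts by \<open>-\<epsilon> j\<close> on \<open>L\<^sub>j\<close> and \<open>I\<^sub>j\<close>; hence \<open>\<sigma> L\<^sub>m \<equiv> c\<^sub>m L\<^sub>\<epsilon>\<^sub>m\<close> modulo \<open>I\<close>'s and
  \<open>\<sigma> I\<^sub>m = e\<^sub>m I\<^sub>\<epsilon>\<^sub>m\<close>, and the brackets give functional equations on \<open>\<int>\<close> (valid only off the diagonal
  \<open>m = n\<close>) whose solutions are \<open>c\<^sub>m = \<epsilon> \<alpha>\<^sup>m\<close>, \<open>e\<^sub>m = \<alpha>\<^sup>m \<mu>\<close>. The \<open>I\<close>-components of the \<open>\<sigma> L\<^sub>m\<close>
  satisfy a linear recursion: the diagonal ones are \<open>m \<alpha>\<^sup>m \<beta>\<close>, and all others are determined by those of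
  \<open>\<sigma> L\<^sub>0\<close>, which are finitely many and are removed by composing with finitely many \<open>exp (w ad I\<^sub>k)\<close>.\<close>

lemma bvec_apply: "bvec b c = (if c = b then 1 else 0)"
  by (simp add: bvec_def)

lemma supp_bvec [simp]: "supp (bvec b) = {b}"
  by (auto simp: supp_def bvec_def)

lemma bvec_in_Vsp [simp]: "bvec b \<in> Vsp"
  by (simp add: Vsp_def)

lemma zero_in_Vsp [simp]: "(\<lambda>d. 0) \<in> Vsp"
  by (simp add: Vsp_def supp_def)

lemma bracket_bvec_bvec: "bracket s lam (bvec b) (bvec c) = br s lam b c"
  unfolding bracket_def supp_bvec by (simp add: bvec_def)

lemma lincomb_in_Vsp: "x \<in> Vsp \<Longrightarrow> y \<in> Vsp \<Longrightarrow> (\<lambda>d. a * x d + b * y d) \<in> Vsp"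
proof -
  assume "x \<in> Vsp" "y \<in> Vsp"
  then have "finite (supp x \<union> supp y)" by (auto simp: Vsp_def)
  moreover have "supp (\<lambda>d. a * x d + b * y d) \<subseteq> supp x \<union> supp y" by (auto simp: supp_def)
  ultimately show ?thesis by (auto simp: Vsp_def intro: finite_subset)
qed

lemma sum_in_Vsp: "finite S \<Longrightarrow> (\<And>i. i \<in> S \<Longrightarrow> v i \<in> Vsp) \<Longrightarrow> (\<lambda>d. \<Sum>i\<in>S. a i * v i d) \<in> Vsp"
proof (induction S rule: finite_induct)
  case (insert i S)
  then have "(\<lambda>d. a i * v i d + 1 * (\<Sum>i\<in>S. a i * v i d)) \<in> Vsp"
    by (intro lincomb_in_Vsp) auto
  with insert.hyps show ?case by simp
qed simp

lemma Vsp_eq_sum_bvec: "x \<in> Vsp \<Longrightarrow> x = (\<lambda>d. \<Sum>b\<in>supp x. x b * bvec b d)"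
proof
  fix d assume "x \<in> Vsp"
  then have "finite (supp x)" by (simp add: Vsp_def)
  have "(\<Sum>b\<in>supp x. x b * bvec b d) = (\<Sum>b\<in>supp x. if b = d then x d else 0)"
    by (intro sum.cong) (auto simp: bvec_apply)
  also have "\<dots> = x d"
    using \<open>finite (supp x)\<close> by (simp add: sum.delta) (simp add: supp_def)
  finally show "x d = (\<Sum>b\<in>supp x. x b * bvec b d)" by simp
qed

lemma finite_coeff_support: "x \<in> Vsp \<Longrightarrow> inj C \<Longrightarrow> finite {a. x (C a) \<noteq> 0}"
proof -
  assume "x \<in> Vsp" "inj C"
  then have "finite (C -` supp x)" by (intro finite_vimageI) (auto simp: Vsp_def)
  moreover have "C -` supp x = {a. x (C a) \<noteq> 0}" by (auto simp: supp_def)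
  ultimately show ?thesis by simp
qed

lemma Veven_odd_coeffs: "x \<in> Veven \<Longrightarrow> x (Gb k) = 0 \<and> x (Hb k) = 0"
  unfolding Veven_def supp_def is_even_b_def by force

lemma Vodd_even_coeffs: "x \<in> Vodd \<Longrightarrow> x (Lb k) = 0 \<and> x (Ib k) = 0"
  unfolding Vodd_def supp_def is_even_b_def by force

lemma bracket_eq_sum_pairs:
  assumes "x \<in> Vsp" "y \<in> Vsp" "finite P"
    and "\<And>b c. (b, c) \<notin> P \<Longrightarrow> x b * y c * br s lam b c d = 0"
  shows "bracket s lam x y d = (\<Sum>(b, c)\<in>P. x b * y c * br s lam b c d)"
proof -
  let ?h = "\<lambda>(b, c). x b * y c * br s lam b c d"
  have fin: "finite (supp x \<times> supp y)" using assms(1,2) by (auto simp: Vsp_def)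
  have "bracket s lam x y d = sum ?h (supp x \<times> supp y)"
    by (simp add: bracket_def sum.cartesian_product)
  also have "\<dots> = sum ?h ((supp x \<times> supp y) \<inter> P)"
    by (rule sum.mono_neutral_right) (use fin assms(4) in \<open>auto, metis mult_eq_0_iff\<close>)
  also have "\<dots> = sum ?h P"
    by (rule sum.mono_neutral_left) (use assms(3) in \<open>auto simp: supp_def\<close>)
  finally show ?thesis .
qed

lemma bracket_Lb_eq:
  assumes "x \<in> Vsp" "y \<in> Vsp"
    and unique: "\<And>a. x (Lb a) \<noteq> 0 \<Longrightarrow> y (Lb (j - a)) \<noteq> 0 \<Longrightarrow> a = p"
  shows "bracket s lam x y (Lb j) = x (Lb p) * y (Lb (j - p)) * of_int (2 * p - j)"
proof -
  have "bracket s lam x y (Lb j) = (\<Sum>(b, c)\<in>{(Lb p, Lb (j - p))}. x b * y c * br s lam b c (Lb j))"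
  proof (rule bracket_eq_sum_pairs[OF assms(1,2)])
    fix b c assume "(b, c) \<notin> {(Lb p, Lb (j - p))}"
    then show "x b * y c * br s lam b c (Lb j) = 0"
      using unique by (cases b; cases c; auto simp: bvec_apply smul_def; metis add_diff_cancel_left')
  qed simp
  then show ?thesis by (simp add: bvec_apply smul_def)
qed

lemma bracket_Ib_eq:
  assumes "x \<in> Vsp" "y \<in> Vsp" "\<And>a. x (Gb a) = 0"
    and "\<And>a. x (Lb a) \<noteq> 0 \<Longrightarrow> a = p" "\<And>a. y (Lb a) \<noteq> 0 \<Longrightarrow> a = q"
  shows "bracket s lam x y (Ib j) =
    x (Lb p) * y (Ib (j - p)) * of_int (2 * p - j) + x (Ib (j - q)) * y (Lb q) * of_int (j - 2 * q)"
proof -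
  have "bracket s lam x y (Ib j) =
      (\<Sum>(b, c)\<in>{(Lb p, Ib (j - p)), (Ib (j - q), Lb q)}. x b * y c * br s lam b c (Ib j))"
  proof (rule bracket_eq_sum_pairs[OF assms(1,2)])
    fix b c assume "(b, c) \<notin> {(Lb p, Ib (j - p)), (Ib (j - q), Lb q)}"
    then show "x b * y c * br s lam b c (Ib j) = 0"
      using assms(3-5) by (cases b; cases c; auto simp: bvec_apply smul_def; metis)
  qed simp
  then show ?thesis by (simp add: bvec_apply smul_def algebra_simps)
qed

section \<open>Off-diagonal Cauchy equations on the integers\<close>

lemma int_additive_off_diagonal:
  fixes f :: "int \<Rightarrow> 'a::ring_1"
  assumes zero: "f 0 = 0" and add: "\<And>m n. m \<noteq> n \<Longrightarrow> f (m + n) = f m + f n"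
  shows "f m = of_int m * f 1"
proof -
  have "f (-1) = - f 1"
    using add[of 1 "-1"] zero by (simp add: eq_neg_iff_add_eq_0 add.commute)
  then have f2: "f 2 = 2 * f 1"
    using add[of 2 "-1"] by (simp add: algebra_simps mult_2)
  have step: "f (i + 1) = f i + f 1" for i
    using add[of i 1] f2 by (cases "i = 1") (simp_all add: mult_2)
  show ?thesis
  proof (induction m rule: int_induct[where k = 0])
    case (step2 i)
    then show ?case using step[of "i - 1"] by (simp add: algebra_simps)
  qed (simp_all add: zero step algebra_simps)
qed

lemma int_multiplicative_off_diagonal:
  fixes d :: "int \<Rightarrow> 'a::field"
  assumes one: "d 0 = 1" and mult: "\<And>m n. m \<noteq> n \<Longrightarrow> d (m + n) = d m * d n"
  shows "d 1 \<noteq> 0" and "d m = d 1 powi m"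
proof -
  have inverse: "d 1 * d (-1) = 1" using mult[of 1 "-1"] one by simp
  then show nonzero: "d 1 \<noteq> 0" by auto
  have "d 1 * d 1 = d 2 * (d 1 * d (-1))"
    using mult[of 2 "-1"] by (simp add: algebra_simps)
  then have d2: "d 2 = d 1 * d 1" using inverse by simp
  have step: "d (i + 1) = d i * d 1" for i
    using mult[of i 1] d2 by (cases "i = 1") simp_all
  show "d m = d 1 powi m"
  proof (induction m rule: int_induct[where k = 0])
    case (step1 i)
    then show ?case using nonzero by (simp add: step power_int_add_1)
  next
    case (step2 i)
    then show ?case using step[of "i - 1"] nonzero by (simp add: power_int_diff field_simps)
  qed (simp add: one)
qed

section \<open>Inner automorphisms\<close>

definition Ispan :: "svec set" where
  "Ispan = {u \<in> Vsp. \<forall>d. u d \<noteq> 0 \<longrightarrow> d \<in> range Ib}"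

lemma expI_Ib: "expI s lam a k (bvec (Ib m)) = bvec (Ib m)"
  unfolding expI_def bracket_bvec_bvec by simp

lemma expI_Lb_plus_Ispan:
  assumes u: "u \<in> Ispan"
  shows "expI s lam a k (\<lambda>d. bvec (Lb m) d + u d) =
    (\<lambda>d. bvec (Lb m) d + u d + a * of_int (k - m) * bvec (Ib (m + k)) d)"
proof
  fix d
  let ?x = "\<lambda>d. bvec (Lb m) d + u d"
  have x: "?x \<in> Vsp"
    using lincomb_in_Vsp[OF bvec_in_Vsp, of u 1 "Lb m" 1] u by (simp add: Ispan_def)
  have u_Lb: "u (Lb m) = 0" and u_nonI: "\<And>c. c \<notin> range Ib \<Longrightarrow> u c = 0"
    using u by (auto simp: Ispan_def)
  have "bracket s lam (bvec (Ib k)) ?x d =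
      (\<Sum>(b, c)\<in>{(Ib k, Lb m)}. bvec (Ib k) b * ?x c * br s lam b c d)"
  proof (rule bracket_eq_sum_pairs[OF bvec_in_Vsp x])
    fix b c assume "(b, c) \<notin> {(Ib k, Lb m)}"
    then show "bvec (Ib k) b * ?x c * br s lam b c d = 0"
      using u_nonI by (cases c) (auto simp: bvec_apply)
  qed simp
  also have "\<dots> = of_int (k - m) * bvec (Ib (m + k)) d"
    using u_Lb by (simp add: bvec_apply smul_def)
  finally show "expI s lam a k ?x d = bvec (Lb m) d + u d + a * of_int (k - m) * bvec (Ib (m + k)) d"
    by (simp add: expI_def)
qed

lemma Igrp_shift_Lb:
  assumes "finite K"
  shows "\<exists>\<tau>\<in>Igrp s lam. (\<forall>m. \<tau> (bvec (Ib m)) = bvec (Ib m)) \<and>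
    (\<forall>m. \<tau> (bvec (Lb m)) =
      (\<lambda>d. bvec (Lb m) d + (\<Sum>k\<in>K. w k * of_int (k - m) * bvec (Ib (m + k)) d)))"
  using assms
proof (induction K rule: finite_induct)
  case empty
  show ?case by (rule bexI[of _ id]) (auto intro: Igrp.ident)
next
  case (insert k K)
  then obtain \<tau> where \<tau>: "\<tau> \<in> Igrp s lam" "\<And>m. \<tau> (bvec (Ib m)) = bvec (Ib m)"
    "\<And>m. \<tau> (bvec (Lb m)) = (\<lambda>d. bvec (Lb m) d + (\<Sum>k\<in>K. w k * of_int (k - m) * bvec (Ib (m + k)) d))"
    by blast
  have Ispan: "(\<lambda>d. \<Sum>k\<in>K. w k * of_int (k - m) * bvec (Ib (m + k)) d) \<in> Ispan" for m
  proof -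
    have "(\<lambda>d. \<Sum>k\<in>K. (w k * of_int (k - m)) * bvec (Ib (m + k)) d) \<in> Vsp"
      using insert.hyps(1) by (rule sum_in_Vsp) simp
    moreover have "(\<Sum>k\<in>K. w k * of_int (k - m) * bvec (Ib (m + k)) d) = 0" if "d \<notin> range Ib" for d
      using that by (intro sum.neutral) (auto simp: bvec_apply)
    ultimately show ?thesis by (auto simp: Ispan_def mult.assoc)
  qed
  show ?case
  proof (intro bexI conjI allI)
    show "expI s lam (w k) k \<circ> \<tau> \<in> Igrp s lam" by (rule Igrp.comp[OF Igrp.gen \<tau>(1)])
    fix m
    show "(expI s lam (w k) k \<circ> \<tau>) (bvec (Ib m)) = bvec (Ib m)" by (simp add: \<tau>(2) expI_Ib)
    show "(expI s lam (w k) k \<circ> \<tau>) (bvec (Lb m)) =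
      (\<lambda>d. bvec (Lb m) d + (\<Sum>k\<in>insert k K. w k * of_int (k - m) * bvec (Ib (m + k)) d))"
      using insert.hyps
      by (simp only: comp_apply \<tau>(3) expI_Lb_plus_Ispan[OF Ispan]) (simp add: add_ac)
  qed
qed

locale automorphism =
  fixes s lam :: complex and \<sigma> :: "svec \<Rightarrow> svec"
  assumes is_aut: "is_aut s lam \<sigma>"
begin

lemma bij_betw_Vsp: "bij_betw \<sigma> Vsp Vsp"
  and map_lincomb: "x \<in> Vsp \<Longrightarrow> y \<in> Vsp \<Longrightarrow> \<sigma> (\<lambda>d. a * x d + b * y d) = (\<lambda>d. a * \<sigma> x d + b * \<sigma> y d)"
  and map_Veven: "x \<in> Veven \<Longrightarrow> \<sigma> x \<in> Veven"
  and map_Vodd: "x \<in> Vodd \<Longrightarrow> \<sigma> x \<in> Vodd"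
  and map_bracket: "x \<in> Vsp \<Longrightarrow> y \<in> Vsp \<Longrightarrow> \<sigma> (bracket s lam x y) = bracket s lam (\<sigma> x) (\<sigma> y)"
  using is_aut unfolding is_aut_def by auto

lemma map_Vsp: "x \<in> Vsp \<Longrightarrow> \<sigma> x \<in> Vsp"
  using bij_betw_Vsp by (auto simp: bij_betw_def)

lemma map_scale: "x \<in> Vsp \<Longrightarrow> \<sigma> (\<lambda>d. a * x d) = (\<lambda>d. a * \<sigma> x d)"
  using map_lincomb[of x x a 0] by simp

lemma map_sum:
  "finite S \<Longrightarrow> (\<And>i. i \<in> S \<Longrightarrow> v i \<in> Vsp) \<Longrightarrow>
    \<sigma> (\<lambda>d. \<Sum>i\<in>S. a i * v i d) = (\<lambda>d. \<Sum>i\<in>S. a i * \<sigma> (v i) d)"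
proof (induction S rule: finite_induct)
  case empty
  then show ?case using map_lincomb[of "\<lambda>d. 0" "\<lambda>d. 0" 0 0] by simp
next
  case (insert i S)
  then have "\<sigma> (\<lambda>d. a i * v i d + 1 * (\<Sum>i\<in>S. a i * v i d)) =
      (\<lambda>d. a i * \<sigma> (v i) d + 1 * \<sigma> (\<lambda>d. \<Sum>i\<in>S. a i * v i d) d)"
    by (intro map_lincomb sum_in_Vsp) auto
  with insert show ?case by simp
qed

lemma map_coeff_eq_0: "x \<in> Vsp \<Longrightarrow> (\<And>b. \<sigma> (bvec b) d = 0) \<Longrightarrow> \<sigma> x d = 0"
  by (subst Vsp_eq_sum_bvec, assumption, subst map_sum) (auto simp: Vsp_def)

abbreviation \<sigma>L :: "int \<Rightarrow> svec" where "\<sigma>L m \<equiv> \<sigma> (bvec (Lb m))"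
abbreviation \<sigma>I :: "int \<Rightarrow> svec" where "\<sigma>I m \<equiv> \<sigma> (bvec (Ib m))"

lemma \<sigma>L_in_Vsp: "\<sigma>L m \<in> Vsp" and \<sigma>I_in_Vsp: "\<sigma>I m \<in> Vsp"
  by (simp_all add: map_Vsp)

lemma \<sigma>L_odd_coeffs: "\<sigma>L m (Gb a) = 0" "\<sigma>L m (Hb a) = 0"
  using Veven_odd_coeffs[OF map_Veven, of "bvec (Lb m)"] by (auto simp: Veven_def is_even_b_def)

lemma \<sigma>G_even_coeffs: "\<sigma> (bvec (Gb k)) (Lb a) = 0" "\<sigma> (bvec (Gb k)) (Ib a) = 0"
  using Vodd_even_coeffs[OF map_Vodd, of "bvec (Gb k)"] by (auto simp: Vodd_def is_even_b_def)

lemma \<sigma>H_even_coeffs: "\<sigma> (bvec (Hb k)) (Lb a) = 0"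
  using Vodd_even_coeffs[OF map_Vodd, of "bvec (Hb k)"] by (auto simp: Vodd_def is_even_b_def)

lemma \<sigma>I_in_Ispan: "\<sigma>I k \<in> Ispan"
proof -
  let ?G = "\<lambda>k. \<sigma> (bvec (Gb k))"
  have I_eq: "\<sigma>I k = bracket s lam (?G (k - twos s)) (?G 0)"
    using map_bracket[of "bvec (Gb (k - twos s))" "bvec (Gb 0)"] by (simp add: bracket_bvec_bvec)
  have "\<sigma>I k d = 0" if "d \<notin> range Ib" for d
  proof -
    have "bracket s lam (?G (k - twos s)) (?G 0) d = (\<Sum>(b, c)\<in>{}. ?G (k - twos s) b * ?G 0 c * br s lam b c d)"
    proof (rule bracket_eq_sum_pairs[OF map_Vsp map_Vsp])
      fix b c
      show "?G (k - twos s) b * ?G 0 c * br s lam b c d = 0"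
        using \<sigma>G_even_coeffs that by (cases b; cases c) (auto simp: bvec_apply smul_def)
    qed simp_all
    then show ?thesis using I_eq by simp
  qed
  then show ?thesis using \<sigma>I_in_Vsp by (auto simp: Ispan_def)
qed

lemma \<sigma>I_nonI_coeffs: "\<sigma>I k (Lb a) = 0" "\<sigma>I k (Gb a) = 0"
  using \<sigma>I_in_Ispan by (auto simp: Ispan_def)

lemma bracket_\<sigma>L_\<sigma>L: "bracket s lam (\<sigma>L m) (\<sigma>L n) = (\<lambda>d. of_int (m - n) * \<sigma>L (m + n) d)"
  using map_bracket[of "bvec (Lb m)" "bvec (Lb n)"] by (simp add: bracket_bvec_bvec smul_def map_scale)

lemma bracket_\<sigma>L_\<sigma>I: "bracket s lam (\<sigma>L m) (\<sigma>I n) = (\<lambda>d. of_int (m - n) * \<sigma>I (m + n) d)"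
  using map_bracket[of "bvec (Lb m)" "bvec (Ib n)"] by (simp add: bracket_bvec_bvec smul_def map_scale)

lemma \<sigma>L_Lb_surj: "\<exists>k. \<sigma>L k (Lb j) \<noteq> 0"
proof (rule ccontr)
  assume "\<nexists>k. \<sigma>L k (Lb j) \<noteq> 0"
  then have "\<sigma> (bvec b) (Lb j) = 0" for b
    using \<sigma>I_nonI_coeffs \<sigma>G_even_coeffs \<sigma>H_even_coeffs by (cases b) auto
  moreover obtain x where "x \<in> Vsp" "\<sigma> x = bvec (Lb j)"
    using bij_betw_Vsp by (metis bij_betw_imp_surj_on bvec_in_Vsp imageE)
  ultimately show False using map_coeff_eq_0 by (metis bvec_apply zero_neq_one)
qed


text \<open>If \<open>\<sigma> L\<^sub>0\<close> had an \<open>L\<close>-degree \<open>Q\<close> with \<open>\<rho> Q < 0\<close>, take it extreme and take \<open>\<sigma> L\<^sub>k\<close> with an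
  \<open>L\<close>-degree beyond \<open>Q\<close>, extreme at \<open>T\<close>: then \<open>[\<sigma> L\<^sub>0, \<sigma> L\<^sub>k] = -k \<sigma> L\<^sub>k\<close> has a nonzero coefficient at
  \<open>Q + T\<close>, outside the \<open>L\<close>-degrees of \<open>\<sigma> L\<^sub>k\<close>.\<close>

lemma \<sigma>L0_Lb_sign:
  assumes \<rho>: "\<rho> = 1 \<or> \<rho> = -1" and q: "\<sigma>L 0 (Lb q) \<noteq> 0"
  shows "0 \<le> \<rho> * q"
proof (rule ccontr)
  assume q_neg: "\<not> 0 \<le> \<rho> * q"
  have extreme: "\<exists>Q. x (Lb Q) \<noteq> 0 \<and> (\<forall>a. x (Lb a) \<noteq> 0 \<longrightarrow> \<rho> * Q \<le> \<rho> * a)"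
    if "x \<in> Vsp" "x (Lb a0) \<noteq> 0" for x a0
  proof -
    have "finite {a. x (Lb a) \<noteq> 0}" "{a. x (Lb a) \<noteq> 0} \<noteq> {}"
      using finite_coeff_support[OF that(1), of Lb] that(2) by (auto simp: inj_def)
    then obtain Q where "is_arg_min (\<lambda>a. \<rho> * a) (\<lambda>a. a \<in> {a. x (Lb a) \<noteq> 0}) Q"
      using ex_is_arg_min_if_finite by blast
    then show ?thesis by (auto simp: is_arg_min_linorder)
  qed
  obtain Q where Q: "\<sigma>L 0 (Lb Q) \<noteq> 0" "\<And>a. \<sigma>L 0 (Lb a) \<noteq> 0 \<Longrightarrow> \<rho> * Q \<le> \<rho> * a"
    using extreme[OF \<sigma>L_in_Vsp q] by blast
  obtain k where "\<sigma>L k (Lb (Q - \<rho>)) \<noteq> 0" using \<sigma>L_Lb_surj by blast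
  then obtain T where T: "\<sigma>L k (Lb T) \<noteq> 0" "\<And>a. \<sigma>L k (Lb a) \<noteq> 0 \<Longrightarrow> \<rho> * T \<le> \<rho> * a"
    using extreme[OF \<sigma>L_in_Vsp] by blast
  have "\<rho> * T \<le> \<rho> * (Q - \<rho>)" using T(2) \<open>\<sigma>L k (Lb (Q - \<rho>)) \<noteq> 0\<close> by blast
  then have T_below_Q: "\<rho> * T < \<rho> * Q" using \<rho> by auto
  have "\<rho> * Q < 0" using Q(2)[OF q] q_neg by simp
  then have "\<sigma>L k (Lb (Q + T)) = 0" using T(2)[of "Q + T"] \<rho> by (auto simp: algebra_simps)
  then have "bracket s lam (\<sigma>L 0) (\<sigma>L k) (Lb (Q + T)) = 0" by (simp add: bracket_\<sigma>L_\<sigma>L)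
  moreover have "bracket s lam (\<sigma>L 0) (\<sigma>L k) (Lb (Q + T)) =
      \<sigma>L 0 (Lb Q) * \<sigma>L k (Lb T) * of_int (Q - T)"
  proof -
    have "a = Q" if "\<sigma>L 0 (Lb a) \<noteq> 0" "\<sigma>L k (Lb (Q + T - a)) \<noteq> 0" for a
      using Q(2)[OF that(1)] T(2)[OF that(2)] \<rho> by (auto simp: algebra_simps)
    then show ?thesis using bracket_Lb_eq[OF \<sigma>L_in_Vsp \<sigma>L_in_Vsp, where j = "Q + T" and p = Q] by simp
  qed
  moreover have "Q \<noteq> T" using T_below_Q by auto
  ultimately show False using Q(1) T(1) by simp
qed

lemma \<sigma>L0_Lb: "\<sigma>L 0 (Lb a) \<noteq> 0 \<Longrightarrow> a = 0"
  using \<sigma>L0_Lb_sign[of 1 a] \<sigma>L0_Lb_sign[of "-1" a] by simp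

lemma \<sigma>L0_eigen: "\<sigma>L k (Lb j) \<noteq> 0 \<Longrightarrow> \<sigma>L 0 (Lb 0) * of_int j = of_int k"
proof -
  assume nonzero: "\<sigma>L k (Lb j) \<noteq> 0"
  have "bracket s lam (\<sigma>L 0) (\<sigma>L k) (Lb j) = \<sigma>L 0 (Lb 0) * \<sigma>L k (Lb j) * of_int (- j)"
    using bracket_Lb_eq[OF \<sigma>L_in_Vsp \<sigma>L_in_Vsp, of 0 _ j 0] \<sigma>L0_Lb by simp
  then have "of_int k = \<sigma>L 0 (Lb 0) * of_int j"
    using nonzero by (simp add: bracket_\<sigma>L_\<sigma>L)
  then show ?thesis by simp
qed

definition eps :: int where
  "eps = (if \<sigma>L 0 (Lb 0) = 1 then 1 else -1)"

lemma \<sigma>L0_Lb0: "\<sigma>L 0 (Lb 0) = of_int eps" and eps_cases: "eps = 1 \<or> eps = -1"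
proof -
  obtain k where k: "\<sigma>L k (Lb 1) \<noteq> 0" using \<sigma>L_Lb_surj by blast
  then have c0: "\<sigma>L 0 (Lb 0) = of_int k" using \<sigma>L0_eigen by fastforce
  have "\<exists>j. \<sigma>L 1 (Lb j) \<noteq> 0"
  proof (rule ccontr)
    assume "\<nexists>j. \<sigma>L 1 (Lb j) \<noteq> 0"
    then have "bracket s lam (\<sigma>L 1) (\<sigma>L (-1)) (Lb 0) = 0"
      using bracket_Lb_eq[OF \<sigma>L_in_Vsp \<sigma>L_in_Vsp, of 1 _ 0 0] by simp
    moreover have "k \<noteq> 0" using k \<sigma>L0_Lb by fastforce
    ultimately show False using c0 by (simp add: bracket_\<sigma>L_\<sigma>L)
  qed
  then obtain j where "\<sigma>L 1 (Lb j) \<noteq> 0" by blast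
  then have "k * j = 1" using \<sigma>L0_eigen c0 by (metis of_int_eq_1_iff of_int_mult)
  then have "k = 1 \<or> k = -1" by (rule pos_zmult_eq_1_iff_lemma)
  then show "\<sigma>L 0 (Lb 0) = of_int eps" "eps = 1 \<or> eps = -1" using c0 by (auto simp: eps_def)
qed

lemma eps_square: "eps * eps = 1"
  using eps_cases by auto

lemma \<sigma>L_Lb_support: "\<sigma>L m (Lb j) \<noteq> 0 \<Longrightarrow> j = eps * m"
  using \<sigma>L0_eigen[of m j] eps_cases by (auto simp: \<sigma>L0_Lb0 simp flip: of_int_mult)


lemma of_int_eps_square: "of_int eps * (of_int eps * z) = (z :: complex)"
  using eps_cases by auto

lemma \<sigma>L_Lb_mult:
  assumes "m \<noteq> n"
  shows "\<sigma>L (m + n) (Lb (eps * (m + n))) = of_int eps * \<sigma>L m (Lb (eps * m)) * \<sigma>L n (Lb (eps * n))"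
proof -
  have "bracket s lam (\<sigma>L m) (\<sigma>L n) (Lb (eps * (m + n))) =
      \<sigma>L m (Lb (eps * m)) * \<sigma>L n (Lb (eps * n)) * of_int (eps * (m - n))"
    using bracket_Lb_eq[OF \<sigma>L_in_Vsp[of m] \<sigma>L_in_Vsp[of n], where s = s and lam = lam and j = "eps * (m + n)" and p = "eps * m"]
      \<sigma>L_Lb_support by (simp add: algebra_simps)
  then have "of_int (m - n) * \<sigma>L (m + n) (Lb (eps * (m + n))) =
      of_int (m - n) * (of_int eps * \<sigma>L m (Lb (eps * m)) * \<sigma>L n (Lb (eps * n)))"
    by (simp add: bracket_\<sigma>L_\<sigma>L algebra_simps)
  with assms show ?thesis by simp
qed

definition alpha :: complex where
  "alpha = of_int eps * \<sigma>L 1 (Lb eps)"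

lemma alpha_nonzero: "alpha \<noteq> 0"
  and \<sigma>L_Lb_diag: "\<sigma>L m (Lb (eps * m)) = of_int eps * alpha powi m"
proof -
  let ?d = "\<lambda>m. of_int eps * \<sigma>L m (Lb (eps * m))"
  have "?d 0 = 1" using \<sigma>L0_Lb0 eps_cases by auto
  moreover have "?d (m + n) = ?d m * ?d n" if "m \<noteq> n" for m n
    using \<sigma>L_Lb_mult[OF that] eps_cases by auto
  moreover have "?d 1 = alpha" by (simp add: alpha_def)
  ultimately have "alpha \<noteq> 0" "?d m = alpha powi m"
    using int_multiplicative_off_diagonal[of ?d] by metis+
  then show "alpha \<noteq> 0" "\<sigma>L m (Lb (eps * m)) = of_int eps * alpha powi m"
    using of_int_eps_square by metis+
qed

lemma \<sigma>L_Lb: "\<sigma>L m (Lb j) = (if j = eps * m then of_int eps * alpha powi m else 0)"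
  using \<sigma>L_Lb_support[of m j] \<sigma>L_Lb_diag by auto

lemma \<sigma>I_Ib_support: "\<sigma>I m (Ib j) \<noteq> 0 \<Longrightarrow> j = eps * m"
proof -
  assume nonzero: "\<sigma>I m (Ib j) \<noteq> 0"
  have "bracket s lam (\<sigma>L 0) (\<sigma>I m) (Ib j) = of_int eps * \<sigma>I m (Ib j) * of_int (- j)"
    using bracket_Ib_eq[OF \<sigma>L_in_Vsp[of 0] \<sigma>I_in_Vsp[of m], where s = s and lam = lam and j = j and p = 0 and q = 0]
      \<sigma>L_odd_coeffs \<sigma>L0_Lb \<sigma>L0_Lb0 \<sigma>I_nonI_coeffs by simp
  then have "of_int m = of_int eps * (of_int j :: complex)"
    using nonzero by (simp add: bracket_\<sigma>L_\<sigma>I)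
  then have "m = eps * j" by (metis of_int_eq_iff of_int_mult)
  then show ?thesis using eps_cases by auto
qed

lemma \<sigma>I_Ib_mult:
  assumes "n \<noteq> m"
  shows "\<sigma>I (n + m) (Ib (eps * (n + m))) = alpha powi n * \<sigma>I m (Ib (eps * m))"
proof -
  have "bracket s lam (\<sigma>L n) (\<sigma>I m) (Ib (eps * (n + m))) =
      of_int eps * alpha powi n * \<sigma>I m (Ib (eps * m)) * of_int (eps * (n - m))"
    using bracket_Ib_eq[OF \<sigma>L_in_Vsp[of n] \<sigma>I_in_Vsp[of m], where s = s and lam = lam and j = "eps * (n + m)" and p = "eps * n" and q = 0]
      \<sigma>L_odd_coeffs \<sigma>L_Lb_support \<sigma>L_Lb_diag \<sigma>I_nonI_coeffs by (simp add: algebra_simps)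
  then have "of_int (n - m) * \<sigma>I (n + m) (Ib (eps * (n + m))) =
      of_int (n - m) * (alpha powi n * \<sigma>I m (Ib (eps * m)))"
    using eps_cases by (auto simp: bracket_\<sigma>L_\<sigma>I algebra_simps)
  with assms show ?thesis by simp
qed

definition mu :: complex where
  "mu = \<sigma>I 0 (Ib 0)"

lemma \<sigma>I_eq: "\<sigma>I m = (\<lambda>d. alpha powi m * mu * bvec (Ib (eps * m)) d)"
proof
  fix d
  have diag: "\<sigma>I m (Ib (eps * m)) = alpha powi m * mu"
    using \<sigma>I_Ib_mult[of m 0] by (cases "m = 0") (simp_all add: mu_def)
  show "\<sigma>I m d = alpha powi m * mu * bvec (Ib (eps * m)) d"
    using \<sigma>I_in_Ispan[of m] \<sigma>I_Ib_support[of m] diag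
    by (cases "d = Ib (eps * m)") (auto simp: Ispan_def bvec_apply)
qed

lemma mu_nonzero: "mu \<noteq> 0"
proof
  assume "mu = 0"
  then have "\<sigma> (bvec (Ib 0)) = \<sigma> (\<lambda>d. 0 * bvec (Ib 0) d)"
    using \<sigma>I_eq[of 0] map_scale[of "bvec (Ib 0)" 0] by simp
  then have "bvec (Ib 0) = (\<lambda>d. 0 * bvec (Ib 0) d)"
    using bij_betw_Vsp lincomb_in_Vsp[of "bvec (Ib 0)" "bvec (Ib 0)" 0 0]
    by (auto simp: bij_betw_def dest: inj_onD)
  then show False by (metis bvec_apply mult_zero_left zero_neq_one)
qed

lemma \<sigma>L_Ib_rec:
  "of_int (m - n) * \<sigma>L (m + n) (Ib j) =
    of_int eps * alpha powi m * of_int (2 * eps * m - j) * \<sigma>L n (Ib (j - eps * m))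
  + of_int eps * alpha powi n * of_int (j - 2 * eps * n) * \<sigma>L m (Ib (j - eps * n))"
  using bracket_Ib_eq[OF \<sigma>L_in_Vsp[of m] \<sigma>L_in_Vsp[of n], where s = s and lam = lam and j = j and p = "eps * m" and q = "eps * n"]
    \<sigma>L_odd_coeffs \<sigma>L_Lb_support \<sigma>L_Lb_diag
  by (simp add: bracket_\<sigma>L_\<sigma>L algebra_simps)

lemma \<sigma>L0_Ib0: "\<sigma>L 0 (Ib 0) = 0"
  using \<sigma>L_Ib_rec[of 1 0 eps] alpha_nonzero eps_cases by auto

lemma \<sigma>L_Ib_off_diag:
  assumes "k \<noteq> 0"
  shows "of_int k * \<sigma>L m (Ib (eps * (m + k))) = alpha powi m * of_int (k - m) * \<sigma>L 0 (Ib (eps * k))"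
  using \<sigma>L_Ib_rec[of m 0 "eps * (m + k)"] eps_cases by (auto simp: algebra_simps)

definition beta :: complex where
  "beta = \<sigma>L 1 (Ib eps) / alpha"

lemma \<sigma>L_Ib_diag: "\<sigma>L m (Ib (eps * m)) = of_int m * alpha powi m * beta"
proof -
  let ?E = "\<lambda>m. \<sigma>L m (Ib (eps * m)) / alpha powi m"
  have "?E 0 = 0" using \<sigma>L0_Ib0 by simp
  moreover have "?E (m + n) = ?E m + ?E n" if "m \<noteq> n" for m n
  proof -
    have "of_int (m - n) * \<sigma>L (m + n) (Ib (eps * (m + n))) = of_int (m - n) *
        (alpha powi m * \<sigma>L n (Ib (eps * n)) + alpha powi n * \<sigma>L m (Ib (eps * m)))"
      using \<sigma>L_Ib_rec[of m n "eps * (m + n)"] eps_cases by (auto simp: algebra_simps)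
    then have "\<sigma>L (m + n) (Ib (eps * (m + n))) =
        alpha powi m * \<sigma>L n (Ib (eps * n)) + alpha powi n * \<sigma>L m (Ib (eps * m))"
      using that by simp
    then show ?thesis using alpha_nonzero by (simp add: power_int_add field_simps)
  qed
  ultimately have "?E m = of_int m * ?E 1" by (rule int_additive_off_diagonal)
  then show ?thesis using alpha_nonzero by (simp add: beta_def field_simps)
qed


definition inner_support :: "int set" where
  "inner_support = {k. \<sigma>L 0 (Ib (eps * k)) \<noteq> 0}"

text \<open>\<open>inner_weight 0 = 0\<close>, by division by zero.\<close>

definition inner_weight :: "int \<Rightarrow> complex" where
  "inner_weight k = - \<sigma>L 0 (Ib (eps * k)) / (of_int k * mu * alpha powi k)"

lemma finite_inner_support: "finite inner_support"
proof -
  have "inner_support = (\<lambda>j. eps * j) ` {j. \<sigma>L 0 (Ib j) \<noteq> 0}"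
    using eps_square by (force simp: inner_support_def mult.assoc[symmetric])
  then show ?thesis using finite_coeff_support[OF \<sigma>L_in_Vsp[of 0], of Ib] by (simp add: inj_def)
qed

lemma inner_weight_cancels:
  "\<sigma>L m (Ib (eps * (m + k))) + inner_weight k * of_int (k - m) * alpha powi (m + k) * mu =
    (if k = 0 then of_int m * alpha powi m * beta else 0)"
proof (cases "k = 0")
  case True
  then show ?thesis by (simp add: inner_weight_def \<sigma>L_Ib_diag)
next
  case False
  have "\<sigma>L m (Ib (eps * (m + k))) = alpha powi m * of_int (k - m) * \<sigma>L 0 (Ib (eps * k)) / of_int k"
    using \<sigma>L_Ib_off_diag[OF False, of m] False by (simp add: eq_divide_eq ac_simps)
  moreover have "inner_weight k * of_int (k - m) * alpha powi (m + k) * mu =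
      - (alpha powi m * of_int (k - m) * \<sigma>L 0 (Ib (eps * k)) / of_int k)"
    using alpha_nonzero mu_nonzero False by (simp add: inner_weight_def power_int_add field_simps)
  ultimately show ?thesis using False by simp
qed

lemma \<sigma>_shifted_Lb:
  "\<sigma> (\<lambda>d. bvec (Lb m) d + (\<Sum>k\<in>inner_support. inner_weight k * of_int (k - m) * bvec (Ib (m + k)) d)) =
    (\<lambda>d. of_int eps * alpha powi m * bvec (Lb (eps * m)) d
       + of_int m * alpha powi m * beta * bvec (Ib (eps * m)) d)"
proof
  fix d
  let ?w = inner_weight and ?K = inner_support
  let ?S = "\<lambda>d. \<Sum>k\<in>?K. (?w k * of_int (k - m)) * bvec (Ib (m + k)) d"
  have "?S \<in> Vsp" using finite_inner_support by (rule sum_in_Vsp) simp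
  then have "\<sigma> (\<lambda>d. 1 * bvec (Lb m) d + 1 * ?S d) = (\<lambda>d. 1 * \<sigma>L m d + 1 * \<sigma> ?S d)"
    by (intro map_lincomb) simp_all
  also have "\<sigma> ?S = (\<lambda>d. \<Sum>k\<in>?K. (?w k * of_int (k - m)) * \<sigma>I (m + k) d)"
    using finite_inner_support by (rule map_sum) simp
  finally have "\<sigma> (\<lambda>d. bvec (Lb m) d + ?S d) d =
      \<sigma>L m d + (\<Sum>k\<in>?K. ?w k * of_int (k - m) * (alpha powi (m + k) * mu * bvec (Ib (eps * (m + k))) d))"
    by (simp add: \<sigma>I_eq)
  also have "\<dots> = of_int eps * alpha powi m * bvec (Lb (eps * m)) d
       + of_int m * alpha powi m * beta * bvec (Ib (eps * m)) d"
  proof (cases d)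
    case (Ib j)
    define k0 where "k0 = eps * j - m"
    have j: "j = eps * (m + k0)" using eps_square by (simp add: k0_def algebra_simps)
    have "(\<Sum>k\<in>?K. ?w k * of_int (k - m) * (alpha powi (m + k) * mu * bvec (Ib (eps * (m + k))) d)) =
        (\<Sum>k\<in>?K. if k = k0 then ?w k0 * of_int (k0 - m) * alpha powi (m + k0) * mu else 0)"
      using eps_cases by (intro sum.cong) (auto simp: Ib j bvec_apply)
    also have "\<dots> = ?w k0 * of_int (k0 - m) * alpha powi (m + k0) * mu"
      using finite_inner_support by (simp add: inner_weight_def inner_support_def)
    finally show ?thesis
      using inner_weight_cancels[of m k0] eps_cases by (auto simp: Ib j bvec_apply)
  qed (simp_all add: bvec_apply \<sigma>L_Lb \<sigma>L_odd_coeffs)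
  finally show "\<sigma> (\<lambda>d. bvec (Lb m) d + (\<Sum>k\<in>?K. ?w k * of_int (k - m) * bvec (Ib (m + k)) d)) d =
      of_int eps * alpha powi m * bvec (Lb (eps * m)) d + of_int m * alpha powi m * beta * bvec (Ib (eps * m)) d"
    by (simp add: mult.assoc)
qed

end

theorem lemma3p2:
  fixes s lam :: complex and \<sigma> :: "svec \<Rightarrow> svec"
  assumes "s = 0 \<or> s = 1/2"
    and "is_aut s lam \<sigma>"
  shows "\<exists>\<tau>\<in>Igrp s lam. \<exists>\<epsilon>::int. \<epsilon> \<in> {1, -1} \<and> (\<exists>\<alpha> \<mu> \<beta> :: complex. \<alpha> \<noteq> 0 \<and> \<mu> \<noteq> 0 \<and>
     (\<forall>m::int.
        (\<sigma> \<circ> \<tau>) (bvec (Lb m)) =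
          (\<lambda>d. of_int \<epsilon> * \<alpha> powi m * bvec (Lb (\<epsilon> * m)) d
              + of_int m * \<alpha> powi m * \<beta> * bvec (Ib (\<epsilon> * m)) d)
      \<and> (\<sigma> \<circ> \<tau>) (bvec (Ib m)) = (\<lambda>d. \<alpha> powi m * \<mu> * bvec (Ib (\<epsilon> * m)) d)))"
proof -
  interpret automorphism s lam \<sigma> by (rule automorphism.intro) (rule assms(2))
  obtain \<tau> where \<tau>: "\<tau> \<in> Igrp s lam" "\<And>m. \<tau> (bvec (Ib m)) = bvec (Ib m)"
    "\<And>m. \<tau> (bvec (Lb m)) = (\<lambda>d. bvec (Lb m) d +
        (\<Sum>k\<in>inner_support. inner_weight k * of_int (k - m) * bvec (Ib (m + k)) d))"
    using Igrp_shift_Lb[OF finite_inner_support] by blast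
  have "(\<sigma> \<circ> \<tau>) (bvec (Lb m)) = (\<lambda>d. of_int eps * alpha powi m * bvec (Lb (eps * m)) d
              + of_int m * alpha powi m * beta * bvec (Ib (eps * m)) d)
      \<and> (\<sigma> \<circ> \<tau>) (bvec (Ib m)) = (\<lambda>d. alpha powi m * mu * bvec (Ib (eps * m)) d)" for m
    by (simp only: comp_apply \<tau>(2,3) \<sigma>_shifted_Lb \<sigma>I_eq)
  with \<tau>(1) eps_cases alpha_nonzero mu_nonzero show ?thesis by blast
qed

end
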